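(* Let $\mathcal{C}_0$ be a linear code of length $\ell$ over a finite field $S$ with $|S|=s$, let $q$ be a power of a prime $p$, let $\mathcal{C}=\mathrm{IC}_q(\mathcal{C}_0)$, and let $n=\ell s$ be its length. If $\mathcal{C}_0$ is $p$-divisible, then $$\mathcal{C}^\perp\cap\mathcal{P}\subseteq\mathcal{C},$$ where $\mathcal{P}=\{c\in\mathbb{F}_q^n:\sum_i c_i=0\}$ is the parity-check code of length $n$; in particular $\dim\mathcal{C}\ge\frac{n-1}{2}$. If moreover $p\mid\ell$, then $\mathcal{C}^\perp\subseteq\mathcal{C}$ and $\dim\mathcal{C}\ge\frac n2$.
   Context: A linear code is $p$-divisible if $p$ divides the Hamming weight of each of its codewords. For a code $\mathcal{C}_0\subseteq S^\ell$, its incidence code over $\mathbb{F}_q$ is $\mathrm{IC}_q(\mathcal{C}_0)=\{u\in\mathbb{F}_q^{S\times[1,\ell]}:\ \sum_{i=1}^\ell u_{(c_i,i)}=0\ \text{for all } c\in\mathcal{C}_0\}$, i.e. the code with parity-check matrix $M$, where $M$ has rows indexed by $c\in\mathcal{C}_0$, columns indexed by $(\alpha,i)\in S\times[1,\ell]$, and $M[c,(\alpha,i)]=1$ iff $c_i=\alpha$. $\mathcal{C}^\perp$ denotes the dual code (here the row space of $M$ over $\mathbb{F}_q$). *)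

theory Defs
  imports "HOL-Analysis.Analysis"
begin

text \<open>Codes of length CARD('l) over a field 'a are subsets of 'a^'l.
  The coordinate set [1,l] is represented by a finite type 'l.\<close>

definition hamming_weight :: "'a::zero ^ 'l::finite \<Rightarrow> nat" where
  "hamming_weight c = card {i. c $ i \<noteq> 0}"

definition linear_code :: "('a::field ^ 'l::finite) set \<Rightarrow> bool" where
  "linear_code C0 \<longleftrightarrow> vec.subspace C0"

definition p_divisible :: "nat \<Rightarrow> ('a::zero ^ 'l::finite) set \<Rightarrow> bool" where
  "p_divisible p C \<longleftrightarrow> (\<forall>c\<in>C. p dvd hamming_weight c)"

definition incidence_row :: "'s ^ 'l::finite \<Rightarrow> 'b::{zero,one} ^ ('s::finite \<times> 'l)" where
  "incidence_row c = (\<chi> x. if c $ snd x = fst x then 1 else 0)"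

definition incidence_code ::
  "('s::finite ^ 'l::finite) set \<Rightarrow> ('b::field ^ ('s \<times> 'l)) set" where
  "incidence_code C0 = {u. \<forall>c\<in>C0. (\<Sum>i\<in>UNIV. u $ (c $ i, i)) = 0}"

definition incidence_dual ::
  "('s::finite ^ 'l::finite) set \<Rightarrow> ('b::field ^ ('s \<times> 'l)) set" where
  "incidence_dual C0 = vec.span (incidence_row ` C0)"

definition parity_code :: "('b::field ^ 'n::finite) set" where
  "parity_code = {c. (\<Sum>i\<in>UNIV. c $ i) = 0}"

end

theory Submission
  imports Defs "HOL-Number_Theory.Residues"
begin

text \<open>The row \<open>r\<^sub>c\<close> of the incidence matrix has its ones exactly at the positions
  \<open>(c\<^sub>i, i)\<close>, so \<open>r\<^sub>c \<cdot> r\<^sub>d\<close> counts the coordinates where \<open>c\<close> and \<open>d\<close> agree,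
  namely \<open>\<ell> - wt(c - d)\<close>. As \<open>C\<^sub>0\<close> is linear and \<open>p\<close>-divisible and \<open>p = 0\<close> in \<open>\<bbbF>\<^sub>q\<close>,
  this is \<open>\<ell>\<close>, which is also the coordinate sum of every row. By linearity,
  \<open>v \<cdot> r\<^sub>d = \<Sum>\<^sub>j v\<^sub>j\<close> for every \<open>v\<close> in the row space \<open>C\<^sup>\<bottom>\<close>, whence \<open>C\<^sup>\<bottom> \<inter> P \<subseteq> C\<close>,
  and \<open>C\<^sup>\<bottom> \<subseteq> P\<close> when \<open>p\<close> divides \<open>\<ell>\<close>. Since \<open>C\<close> is the annihilator of \<open>C\<^sup>\<bottom>\<close>,
  \<open>dim C + dim C\<^sup>\<bottom> \<ge> n\<close>; together with \<open>dim (C\<^sup>\<bottom> \<inter> P) \<ge> dim C\<^sup>\<bottom> - 1\<close> this gives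
  the dimension bounds.\<close>

definition dot :: "'b::field ^ 'n::finite \<Rightarrow> 'b ^ 'n \<Rightarrow> 'b" where
  "dot x y = (\<Sum>j\<in>UNIV. x $ j * y $ j)"

definition annihilator :: "('b::field ^ 'n::finite) set \<Rightarrow> ('b ^ 'n) set" where
  "annihilator S = {x. \<forall>y\<in>S. dot x y = 0}"

interpretation vec_functional: vector_space_pair "(*s)" "(*) :: 'b::field \<Rightarrow> 'b \<Rightarrow> 'b"
  by (simp add: vector_space_pair_def vec.vector_space_axioms
      vector_space_over_itself.vector_space_axioms)

lemma dot_commute: "dot x y = dot y x"
  by (simp add: dot_def mult.commute)

lemma linear_dot_left: "Vector_Spaces.linear (*s) (*) (\<lambda>x. dot x y)"
  unfolding Vector_Spaces.linear_iff
  by (simp add: vec.vector_space_axioms vector_space_over_itself.vector_space_axioms dot_def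
      distrib_right sum.distrib sum_distrib_left mult.assoc)

lemma linear_sum_coords: "Vector_Spaces.linear (*s) (*) (\<lambda>x::'b::field^'n. \<Sum>j\<in>UNIV. x $ j)"
  unfolding Vector_Spaces.linear_iff
  by (simp add: vec.vector_space_axioms vector_space_over_itself.vector_space_axioms
      sum.distrib sum_distrib_left)

lemma dim_le_Suc_dim_Int_kernel:
  fixes S :: "('b::field ^ 'n::finite) set"
  assumes S: "vec.subspace S" and lin: "Vector_Spaces.linear (*s) (*) \<phi>"
  shows "vec.dim S \<le> Suc (vec.dim (S \<inter> {x. \<phi> x = 0}))"
proof (cases "\<forall>v\<in>S. \<phi> v = 0")
  case True
  then have "S \<inter> {x. \<phi> x = 0} = S" by auto
  then show ?thesis by simp
next
  case False
  then obtain v where v: "v \<in> S" "\<phi> v \<noteq> 0" by auto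
  let ?K = "S \<inter> {x. \<phi> x = 0}"
  have "S \<subseteq> vec.span (insert v ?K)"
  proof
    fix w assume w: "w \<in> S"
    define t where "t = \<phi> w / \<phi> v"
    have "w - t *s v \<in> ?K"
      using S v w lin
      by (simp add: vec.subspace_diff vec.subspace_scale vec_functional.linear_diff
          vec_functional.linear_scale t_def)
    then have "(w - t *s v) + t *s v \<in> vec.span (insert v ?K)"
      by (intro vec.span_add) (simp_all add: vec.span_base vec.span_scale)
    then show "w \<in> vec.span (insert v ?K)" by simp
  qed
  then have "vec.dim S \<le> vec.dim (insert v ?K)"
    by (rule vec.dim_mono)
  also have "\<dots> \<le> Suc (vec.dim ?K)"
    by (simp add: vec.dim_insert)
  finally show ?thesis .
qed

lemma subspace_annihilator: "vec.subspace (annihilator S)"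
proof -
  have "annihilator S = \<Inter> ((\<lambda>y. {x. dot x y = 0}) ` S)"
    by (auto simp: annihilator_def)
  moreover have "\<forall>K \<in> (\<lambda>y. {x. dot x y = 0}) ` S. vec.subspace K"
    using vec_functional.linear_subspace_kernel[OF linear_dot_left] by blast
  ultimately show ?thesis
    by (simp add: vec.subspace_Inter)
qed

lemma annihilator_span: "annihilator (vec.span S) = annihilator S"
proof
  show "annihilator (vec.span S) \<subseteq> annihilator S"
    unfolding annihilator_def using vec.span_base by blast
  show "annihilator S \<subseteq> annihilator (vec.span S)"
  proof
    fix x assume "x \<in> annihilator S"
    then have "\<And>y. y \<in> S \<Longrightarrow> dot y x = 0"
      by (simp add: annihilator_def dot_commute[of _ x])
    then have "dot y x = 0" if "y \<in> vec.span S" for y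
      using vec_functional.linear_eq_0_on_span[OF linear_dot_left] that by blast
    then show "x \<in> annihilator (vec.span S)"
      by (simp add: annihilator_def dot_commute[of x])
  qed
qed

lemma card_le_dim_annihilator_add_card:
  fixes B :: "('b::field ^ 'n::finite) set"
  assumes "finite B"
  shows "CARD('n) \<le> vec.dim (annihilator B) + card B"
  using assms
proof (induction B rule: finite_induct)
  case empty
  have "(annihilator {} :: ('b ^ 'n) set) = UNIV"
    by (simp add: annihilator_def)
  then have "vec.dim (annihilator {} :: ('b ^ 'n) set) = CARD('n)"
    by (simp only: vec_dim_card)
  then show ?case by simp
next
  case (insert b B)
  have "annihilator (insert b B) = annihilator B \<inter> {x. dot x b = 0}"
    by (auto simp: annihilator_def)
  then have "vec.dim (annihilator B) \<le> Suc (vec.dim (annihilator (insert b B)))"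
    using dim_le_Suc_dim_Int_kernel[OF subspace_annihilator linear_dot_left] by simp
  then show ?case using insert by simp
qed

lemma card_le_dim_annihilator_add_dim:
  fixes S :: "('b::field ^ 'n::finite) set"
  shows "CARD('n) \<le> vec.dim (annihilator S) + vec.dim S"
proof -
  obtain B where B: "B \<subseteq> S" "vec.independent B" "S \<subseteq> vec.span B" "card B = vec.dim S"
    by (rule vec.basis_exists)
  have "vec.span S = vec.span B"
    unfolding vec.span_eq using B(1,3) vec.span_superset by blast
  then have "annihilator S = annihilator B"
    using annihilator_span[of S] annihilator_span[of B] by simp
  then show ?thesis
    using card_le_dim_annihilator_add_card[OF vec.finiteI_independent[OF B(2)]] B(4) by simp
qed

lemma card_le_two_mul_dim_annihilator:
  fixes W :: "('b::field ^ 'n::finite) set"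
  assumes "W \<subseteq> annihilator W"
  shows "CARD('n) \<le> 2 * vec.dim (annihilator W)"
  using card_le_dim_annihilator_add_dim[of W] vec.dim_subset[OF assms] by linarith

lemma card_le_Suc_two_mul_dim_annihilator:
  fixes W :: "('b::field ^ 'n::finite) set"
  assumes "vec.subspace W" "Vector_Spaces.linear (*s) (*) \<phi>"
    and "W \<inter> {x. \<phi> x = 0} \<subseteq> annihilator W"
  shows "CARD('n) \<le> Suc (2 * vec.dim (annihilator W))"
  using card_le_dim_annihilator_add_dim[of W] dim_le_Suc_dim_Int_kernel[OF assms(1,2)]
    vec.dim_subset[OF assms(3)] by linarith

lemma of_nat_prime_eq_0_if_card_eq_power:
  assumes "prime p" "CARD('b::{field,finite}) = p ^ k"
  shows "(of_nat p :: 'b) = 0"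
proof -
  have "prime CHAR('b)" by (simp add: prime_CHAR_semidom finite_imp_CHAR_pos)
  moreover have "CHAR('b) dvd p ^ k" using CHAR_dvd_CARD assms(2) by metis
  ultimately have "CHAR('b) dvd p" using prime_dvd_power by blast
  then show ?thesis by (simp add: of_nat_eq_0_iff_char_dvd)
qed

lemma parity_code_eq_kernel: "parity_code = {x. (\<Sum>j\<in>UNIV. x $ j) = 0}"
  by (simp add: parity_code_def)

lemma dot_incidence_row:
  fixes u :: "'b::field ^ ('s::finite \<times> 'l::finite)"
  shows "dot u (incidence_row c) = (\<Sum>i\<in>UNIV. u $ (c $ i, i))"
proof -
  have "dot u (incidence_row c)
      = (\<Sum>a\<in>UNIV. \<Sum>i\<in>UNIV. u $ (a, i) * (if c $ i = a then 1 else 0))"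
    unfolding dot_def incidence_row_def
    by (simp add: sum.cartesian_product UNIV_Times_UNIV[symmetric] split_beta
        del: UNIV_Times_UNIV)
  also have "\<dots> = (\<Sum>i\<in>UNIV. \<Sum>a\<in>UNIV. u $ (a, i) * (if c $ i = a then 1 else 0))"
    by (rule sum.swap)
  also have "\<dots> = (\<Sum>i\<in>UNIV. u $ (c $ i, i))"
    by (simp add: if_distrib cong: if_cong)
  finally show ?thesis .
qed

lemma sum_incidence_row:
  "(\<Sum>j\<in>UNIV. (incidence_row c :: 'b::field ^ ('s::finite \<times> 'l::finite)) $ j) = of_nat CARD('l)"
  using dot_incidence_row[of "\<chi> _. 1" c] by (simp add: dot_def)

lemma dot_incidence_rows:
  "dot (incidence_row c) (incidence_row d :: 'b::field ^ ('s::finite \<times> 'l::finite))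
     = of_nat (card {i. c $ i = d $ i})"
proof -
  have "dot (incidence_row c) (incidence_row d :: 'b ^ ('s \<times> 'l))
      = (\<Sum>i\<in>UNIV. (incidence_row c :: 'b ^ ('s \<times> 'l)) $ (d $ i, i))"
    by (rule dot_incidence_row)
  also have "\<dots> = (\<Sum>i\<in>UNIV. if c $ i = d $ i then 1 else 0)"
    by (simp add: incidence_row_def)
  also have "\<dots> = of_nat (card {i. c $ i = d $ i})"
    by (simp add: sum.If_cases)
  finally show ?thesis .
qed

lemma incidence_code_eq_annihilator:
  "incidence_code C0
     = annihilator (incidence_dual C0 :: ('b::field ^ ('s::finite \<times> 'l::finite)) set)"
  unfolding incidence_dual_def annihilator_span
  by (auto simp: incidence_code_def annihilator_def dot_incidence_row)

lemma card_agree_add_hamming_weight: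
  fixes c d :: "'a::ab_group_add ^ 'l::finite"
  shows "card {i. c $ i = d $ i} + hamming_weight (c - d) = CARD('l)"
proof -
  have "card ({i. c $ i = d $ i} \<union> {i. c $ i \<noteq> d $ i})
      = card {i. c $ i = d $ i} + card {i. c $ i \<noteq> d $ i}"
    by (rule card_Un_disjoint) auto
  moreover have "{i. c $ i = d $ i} \<union> {i. c $ i \<noteq> d $ i} = UNIV"
    by auto
  ultimately show ?thesis
    by (simp add: hamming_weight_def)
qed

lemma dot_incidence_rows_divisible:
  fixes C0 :: "('a::{field,finite} ^ 'l::finite) set"
  assumes lin: "linear_code C0" and div: "p_divisible p C0" and p0: "(of_nat p :: 'b::field) = 0"
    and c: "c \<in> C0" and d: "d \<in> C0"
  shows "dot (incidence_row c) (incidence_row d :: 'b::field ^ ('a \<times> 'l)) = of_nat CARD('l)"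
proof -
  have "c - d \<in> C0"
    using lin c d by (simp add: linear_code_def vec.subspace_diff)
  then obtain m where "hamming_weight (c - d) = p * m"
    using div by (auto simp: p_divisible_def elim!: dvdE)
  then have weight: "(of_nat (hamming_weight (c - d)) :: 'b) = 0"
    by (simp add: p0)
  have "(of_nat CARD('l) :: 'b)
      = of_nat (card {i. c $ i = d $ i}) + of_nat (hamming_weight (c - d))"
    by (simp flip: of_nat_add add: card_agree_add_hamming_weight)
  then show ?thesis
    by (simp add: weight dot_incidence_rows)
qed

lemma dot_incidence_dual_row:
  fixes C0 :: "('a::{field,finite} ^ 'l::finite) set" and v :: "'b::field ^ ('a \<times> 'l)"
  assumes "linear_code C0" "p_divisible p C0" "(of_nat p :: 'b) = 0"
    and v: "v \<in> incidence_dual C0" and d: "d \<in> C0"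
  shows "dot v (incidence_row d) = (\<Sum>j\<in>UNIV. v $ j)"
proof -
  have "dot x (incidence_row d) = (\<Sum>j\<in>UNIV. x $ j)"
    if "x \<in> incidence_row ` C0" for x :: "'b ^ ('a \<times> 'l)"
    using that dot_incidence_rows_divisible[OF assms(1-3) _ d] by (auto simp: sum_incidence_row)
  moreover have "v \<in> vec.span (incidence_row ` C0)"
    using v by (simp add: incidence_dual_def)
  ultimately show ?thesis
    by (rule vec_functional.linear_eq_on_span[OF linear_dot_left linear_sum_coords])
qed

lemma incidence_dual_Int_parity_subset_code:
  fixes C0 :: "('a::{field,finite} ^ 'l::finite) set"
  assumes "linear_code C0" "p_divisible p C0" "(of_nat p :: 'b::field) = 0"
  shows "incidence_dual C0 \<inter> parity_code \<subseteq> (incidence_code C0 :: ('b::field ^ ('a \<times> 'l)) set)"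
proof
  fix v :: "'b ^ ('a \<times> 'l)"
  assume "v \<in> incidence_dual C0 \<inter> parity_code"
  then have v: "v \<in> incidence_dual C0" "(\<Sum>j\<in>UNIV. v $ j) = 0"
    by (auto simp: parity_code_def)
  have "(\<Sum>i\<in>UNIV. v $ (c $ i, i)) = 0" if "c \<in> C0" for c
    using dot_incidence_dual_row[OF assms v(1) that] v(2) by (simp add: dot_incidence_row)
  then show "v \<in> incidence_code C0"
    by (simp add: incidence_code_def)
qed

lemma incidence_dual_subset_parity:
  assumes "(of_nat CARD('l::finite) :: 'b::field) = 0"
  shows "incidence_dual C0 \<subseteq> (parity_code :: ('b::field ^ ('s::finite \<times> 'l::finite)) set)"
proof -
  have "incidence_row ` C0 \<subseteq> (parity_code :: ('b ^ ('s \<times> 'l)) set)"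
    using assms by (auto simp: parity_code_def sum_incidence_row)
  moreover have "vec.subspace (parity_code :: ('b ^ ('s \<times> 'l)) set)"
    unfolding parity_code_eq_kernel
    by (rule vec_functional.linear_subspace_kernel[OF linear_sum_coords])
  ultimately show ?thesis
    unfolding incidence_dual_def by (rule vec.span_minimal)
qed

theorem mainTheorem14:
  fixes C0 :: "('a::{field,finite} ^ 'l::finite) set"
    and p k :: nat
  assumes lin: "linear_code C0"
    and p_prime: "prime p" and k_pos: "k > 0"
    and q_def: "CARD('b::{field,finite}) = p ^ k"
    and div: "p_divisible p C0"
  shows "(incidence_dual C0 \<inter> parity_code \<subseteq> (incidence_code C0 :: ('b ^ ('a \<times> 'l)) set))
       \<and> real (vec.dim (incidence_code C0 :: ('b ^ ('a \<times> 'l)) set))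
            \<ge> (real (CARD('l) * CARD('a)) - 1) / 2
       \<and> (p dvd CARD('l) \<longrightarrow>
            incidence_dual C0 \<subseteq> (incidence_code C0 :: ('b ^ ('a \<times> 'l)) set)
          \<and> real (vec.dim (incidence_code C0 :: ('b ^ ('a \<times> 'l)) set))
            \<ge> real (CARD('l) * CARD('a)) / 2)"
proof -
  let ?C = "incidence_code C0 :: ('b ^ ('a \<times> 'l)) set"
  let ?D = "incidence_dual C0 :: ('b ^ ('a \<times> 'l)) set"
  have p0: "(of_nat p :: 'b) = 0"
    using p_prime q_def by (rule of_nat_prime_eq_0_if_card_eq_power)
  have n: "CARD('a \<times> 'l) = CARD('l) * CARD('a)"
    by simp
  have C_eq: "?C = annihilator ?D"
    by (rule incidence_code_eq_annihilator)
  have DPC: "?D \<inter> parity_code \<subseteq> ?C"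
    using lin div p0 by (rule incidence_dual_Int_parity_subset_code)
  have "CARD('a \<times> 'l) \<le> Suc (2 * vec.dim ?C)"
    unfolding C_eq
    using DPC vec.subspace_span linear_sum_coords
    by (intro card_le_Suc_two_mul_dim_annihilator)
      (auto simp: C_eq incidence_dual_def parity_code_eq_kernel)
  then have "real (CARD('l) * CARD('a)) \<le> real (Suc (2 * vec.dim ?C))"
    unfolding n[symmetric] by (simp only: of_nat_le_iff)
  then have dim_C: "real (vec.dim ?C) \<ge> (real (CARD('l) * CARD('a)) - 1) / 2"
    by simp
  have "?D \<subseteq> ?C \<and> real (vec.dim ?C) \<ge> real (CARD('l) * CARD('a)) / 2"
    if "p dvd CARD('l)"
  proof -
    have "?D \<subseteq> parity_code"
      using that p0 by (intro incidence_dual_subset_parity) (auto elim!: dvdE)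
    with DPC have "?D \<subseteq> ?C" by blast
    then have "CARD('a \<times> 'l) \<le> 2 * vec.dim ?C"
      unfolding C_eq by (rule card_le_two_mul_dim_annihilator)
    then have "real (CARD('l) * CARD('a)) \<le> real (2 * vec.dim ?C)"
      unfolding n[symmetric] by (simp only: of_nat_le_iff)
    with \<open>?D \<subseteq> ?C\<close> show ?thesis by simp
  qed
  with DPC dim_C show ?thesis by blast
qed

end
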